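(* Let $N$ be the Iwasawa N-group of a real simple Lie group of real rank one, i.e. $N$ is one of: the abelian Lie group $\mathbb{R}^n$, a $(2n+1)$-dimensional Heisenberg group, a $(4n+3)$-dimensional quaternionic Heisenberg group, or the $15$-dimensional octonionic Heisenberg group. Then $N$ satisfies the partial automatic continuity. More precisely, for every abstract (not necessarily continuous) group automorphism $F$ of $N$ there exist a central automorphism $\mu$ of $N$ and a Lie group automorphism $\overline{F}$ of $N$ such that $F=\mu\circ\overline{F}$.
   Context: For a real simple Lie group $G$ with Iwasawa decomposition $G=KAN$, the simply connected nilpotent group $N$ is its Iwasawa N-group. A central automorphism of $N$ is an abstract group automorphism $F$ with $x^{-1}F(x)$ in the center of $N$ for all $x\in N$; a Lie group automorphism is a continuous (hence smooth) group automorphism. Field automorphisms of a simply connected nilpotent Lie group $N$ with Lie algebra $\mathcal{N}$: if $\mathcal{N}=\mathcal{N}_1\oplus\cdots\oplus\mathcal{N}_k$ is a direct sum of ideals, for each $\mathcal{N}_i$ that is the realification of a complex Lie algebra choose a $\mathbb{C}$-basis $e_1,\dots,e_m$ and a field automorphism $\varphi$ of $\mathbb{C}$ fixing the structure constants and let $\sigma_i(\sum x_le_l)=\sum\varphi(x_l)e_l$, otherwise $\sigma_i=\mathrm{id}$; then $\exp\circ(\sigma_1\times\cdots\times\sigma_k)\circ\exp^{-1}$ is a field automorphism. $N$ satisfies the partial automatic continuity if every abstract group automorphism has the form $\mu\circ\overline{F}\circ\Phi$ with $\mu$ central, $\overline{F}$ a Lie group automorphism, $\Phi$ a field automorphism.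 *)

theory Defs
  imports "HOL-Analysis.Analysis" "HOL-Algebra.Group"
begin

definition group_center :: "('a, 'b) monoid_scheme \<Rightarrow> 'a set" where
  "group_center G = {z \<in> carrier G. \<forall>x\<in>carrier G. z \<otimes>\<^bsub>G\<^esub> x = x \<otimes>\<^bsub>G\<^esub> z}"

definition central_aut :: "('a, 'b) monoid_scheme \<Rightarrow> ('a \<Rightarrow> 'a) \<Rightarrow> bool" where
  "central_aut G F \<longleftrightarrow> F \<in> iso G G \<and>
     (\<forall>x\<in>carrier G. inv\<^bsub>G\<^esub> x \<otimes>\<^bsub>G\<^esub> F x \<in> group_center G)"

definition lie_aut :: "('a::topological_space, 'b) monoid_scheme \<Rightarrow> ('a \<Rightarrow> 'a) \<Rightarrow> bool" where
  "lie_aut G F \<longleftrightarrow> F \<in> iso G G \<and> continuous_on (carrier G) F"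

definition aut_central_lie_decomp :: "('a::topological_space, 'b) monoid_scheme \<Rightarrow> bool" where
  "aut_central_lie_decomp G \<longleftrightarrow>
     (\<forall>F\<in>iso G G. \<exists>\<mu> Fb. central_aut G \<mu> \<and> lie_aut G Fb \<and>
        (\<forall>x\<in>carrier G. F x = \<mu> (Fb x)))"

definition vec_group :: "(real^'n) monoid" where
  "vec_group = \<lparr>carrier = UNIV, mult = (+), one = 0\<rparr>"

text \<open>Two-step nilpotent group on V x Z in exponential coordinates, given the bracket
  \<omega> : V x V \<rightarrow> Z (skew, bilinear): (v,z)(v',z') = (v+v', z+z'+ 1/2 \<omega>(v,v')).\<close>
definition two_step_group ::
  "('v::real_vector \<Rightarrow> 'v \<Rightarrow> 'z::real_vector) \<Rightarrow> ('v \<times> 'z) monoid" where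
  "two_step_group \<omega> = \<lparr>carrier = UNIV,
     mult = (\<lambda>(v, z) (v', z'). (v + v', z + z' + (1/2) *\<^sub>R \<omega> v v')),
     one = (0, 0)\<rparr>"

definition heis_form :: "((real^'n) \<times> (real^'n)) \<Rightarrow> ((real^'n) \<times> (real^'n)) \<Rightarrow> real" where
  "heis_form = (\<lambda>(x, y) (x', y'). x \<bullet> y' - y \<bullet> x')"

definition heisenberg_group :: "(((real^'n) \<times> (real^'n)) \<times> real) monoid" where
  "heisenberg_group = two_step_group heis_form"

text \<open>Quaternions as real^4 (components 1,2,3,4 = 1,i,j,k).\<close>
definition qmult :: "real^4 \<Rightarrow> real^4 \<Rightarrow> real^4" where
  "qmult p q = (\<chi> l.
     if l = 1 then p$1*q$1 - p$2*q$2 - p$3*q$3 - p$4*q$4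
     else if l = 2 then p$1*q$2 + p$2*q$1 + p$3*q$4 - p$4*q$3
     else if l = 3 then p$1*q$3 - p$2*q$4 + p$3*q$1 + p$4*q$2
     else p$1*q$4 + p$2*q$3 - p$3*q$2 + p$4*q$1)"

definition qconj :: "real^4 \<Rightarrow> real^4" where
  "qconj p = (\<chi> l. if l = 1 then p$1 else - p$l)"

text \<open>Imaginary part of a quaternion, as an element of real^3 ~ Im H.\<close>
definition qim :: "real^4 \<Rightarrow> real^3" where
  "qim p = (\<chi> l. if l = 1 then p$2 else if l = 2 then p$3 else p$4)"

text \<open>Quaternionic Heisenberg group of dimension 4n+3: V = H^n, Z = Im H,
  bracket Im(sum_i conj(v_i) v'_i).\<close>
definition qheis_form :: "real^4^'n \<Rightarrow> real^4^'n \<Rightarrow> real^3" where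
  "qheis_form v w = qim (\<Sum>i\<in>UNIV. qmult (qconj (v$i)) (w$i))"

definition quaternionic_heisenberg_group :: "((real^4^'n) \<times> (real^3)) monoid" where
  "quaternionic_heisenberg_group = two_step_group qheis_form"

text \<open>Octonions as H x H via Cayley--Dickson: (a,b)(c,d) = (ac - conj(d) b, d a + b conj(c)).\<close>
definition omult :: "((real^4) \<times> (real^4)) \<Rightarrow> ((real^4) \<times> (real^4)) \<Rightarrow> ((real^4) \<times> (real^4))" where
  "omult = (\<lambda>(a, b) (c, d). (qmult a c - qmult (qconj d) b, qmult d a + qmult b (qconj c)))"

definition oconj :: "((real^4) \<times> (real^4)) \<Rightarrow> ((real^4) \<times> (real^4))" where
  "oconj = (\<lambda>(a, b). (qconj a, - b))"

text \<open>Imaginary part of an octonion, as an element of real^3 x real^4 ~ Im O (dimension 7).\<close>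
definition oim :: "((real^4) \<times> (real^4)) \<Rightarrow> ((real^3) \<times> (real^4))" where
  "oim = (\<lambda>(a, b). (qim a, b))"

text \<open>15-dimensional octonionic Heisenberg group: V = O, Z = Im O, bracket Im(conj(v) v').\<close>
definition oheis_form :: "((real^4) \<times> (real^4)) \<Rightarrow> ((real^4) \<times> (real^4)) \<Rightarrow> ((real^3) \<times> (real^4))" where
  "oheis_form v w = oim (omult (oconj v) w)"

definition octonionic_heisenberg_group :: "(((real^4) \<times> (real^4)) \<times> ((real^3) \<times> (real^4))) monoid" where
  "octonionic_heisenberg_group = two_step_group oheis_form"

end

theory Submission
  imports Defs
begin

(* For a nondegenerate \<omega>
   the center is {0} \<times> Z, so an abstract automorphism F preserves it and is triangular:
   F (v, z) = (f v, h v + g z) with f, g, h additive and g (\<omega> v w) = \<omega> (f v) (f w).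
   If moreover \<omega> is "rigid", i.e. \<omega>(u, -) vanishes on the kernel of \<omega>(x, -) only when u is
   a real multiple of x, then the bracket identity forces f (t v) = c(t) f v with a scalar c(t)
   independent of v.  The map c is a ring endomorphism of \<real>, hence the identity, so f and g are
   linear; (v, z) \<mapsto> (f v, g z) is a continuous automorphism, and F differs from it by the
   central shear (v, z) \<mapsto> (v, z + h (f\<inverse> v)).  Real symplectic forms are rigid by linear
   algebra; the quaternionic and octonionic forms are rigid because the bracket is the imaginary
   part of a Hermitian product, which can be divided by nonzero elements. *)

section \<open>Additive and semilinear maps over the reals\<close>

lemma self_eq_neg_imp_zero:
  fixes x :: "'a::real_vector"
  assumes "x = - x"
  shows "x = 0"
proof -
  have "2 *\<^sub>R x = 0" using assms by (simp add: scaleR_2 eq_neg_iff_add_eq_0)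
  then show ?thesis by simp
qed

lemma additive_scaleR_half:
  fixes f :: "'a::real_vector \<Rightarrow> 'b::real_vector"
  assumes "Modules.additive f"
  shows "f ((1/2) *\<^sub>R x) = (1/2) *\<^sub>R f x"
proof -
  have "x = (1/2) *\<^sub>R x + (1/2) *\<^sub>R x" by (simp flip: scaleR_add_left)
  then have "f x = f ((1/2) *\<^sub>R x) + f ((1/2) *\<^sub>R x)" by (metis additive.add[OF assms])
  then show ?thesis by (simp flip: scaleR_2)
qed

lemma additive_inv_into:
  assumes add: "Modules.additive f" and "bij f"
  shows "Modules.additive (inv_into UNIV f)"
proof
  fix a b
  have "a + b = f (inv_into UNIV f a + inv_into UNIV f b)"
    using \<open>bij f\<close> by (simp add: additive.add[OF add] bij_is_surj surj_f_inv_f)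
  then show "inv_into UNIV f (a + b) = inv_into UNIV f a + inv_into UNIV f b"
    using \<open>bij f\<close> by (simp add: bij_is_inj)
qed

lemma ring_endomorphism_fixes_Rats:
  fixes c :: "real \<Rightarrow> real"
  assumes add: "Modules.additive c" and mult: "\<And>a b. c (a * b) = c a * c b" and one: "c 1 = 1"
    and "r \<in> \<rat>"
  shows "c r = r"
proof -
  have c_of_nat: "c (of_nat n) = of_nat n" for n
    by (induction n) (simp_all add: additive.zero[OF add] additive.add[OF add] one)
  have c_of_int: "c (of_int k) = of_int k" for k
  proof (cases "k \<ge> 0")
    case True
    then show ?thesis using c_of_nat[of "nat k"] by simp
  next
    case False
    then show ?thesis using c_of_nat[of "nat (- k)"] additive.minus[OF add, of "of_nat (nat (- k))"]
      by simp
  qed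
  obtain a b where r: "r = of_int a / of_int b" and b: "b > 0"
    using Rats_cases'[OF \<open>r \<in> \<rat>\<close>] by blast
  have ab: "r * of_int b = of_int a" using r b by simp
  have "c r * of_int b = c (r * of_int b)" by (simp add: mult c_of_int)
  also have "\<dots> = r * of_int b" by (simp only: ab c_of_int)
  finally show ?thesis using b by simp
qed

lemma real_ring_endomorphism_eq_id:
  fixes c :: "real \<Rightarrow> real"
  assumes add: "Modules.additive c" and mult: "\<And>a b. c (a * b) = c a * c b" and one: "c 1 = 1"
  shows "c x = x"
proof -
  have nonneg: "c a \<ge> 0" if "a \<ge> 0" for a
  proof -
    have "c a = c (sqrt a * sqrt a)" using that by simp
    also have "\<dots> = c (sqrt a) * c (sqrt a)" by (rule mult)
    finally have "c a = c (sqrt a) * c (sqrt a)" .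
    then show ?thesis by simp
  qed
  have mono: "c a \<le> c b" if "a \<le> b" for a b
    using nonneg[of "b - a"] additive.diff[OF add, of b a] that by simp
  have fixes_Rats: "c r = r" if "r \<in> \<rat>" for r
    using ring_endomorphism_fixes_Rats[OF add mult one that] .
  show ?thesis
  proof (rule ccontr)
    assume "c x \<noteq> x"
    then consider "c x < x" | "x < c x" by linarith
    then show False
    proof cases
      case 1
      then obtain r where r: "r \<in> \<rat>" "c x < r" "r < x" using Rats_dense_in_real by blast
      then show False using mono[OF less_imp_le[OF r(3)]] fixes_Rats[OF r(1)] by linarith
    next
      case 2
      then obtain r where r: "r \<in> \<rat>" "x < r" "r < c x" using Rats_dense_in_real by blast
      then show False using mono[OF less_imp_le[OF r(2)]] fixes_Rats[OF r(1)] by linarith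
    qed
  qed
qed

lemma semilinear_imp_linear:
  fixes f :: "'a::real_vector \<Rightarrow> 'b::real_vector" and c :: "real \<Rightarrow> real"
  assumes add: "Modules.additive f" and scale: "\<And>t v. f (t *\<^sub>R v) = c t *\<^sub>R f v" and "f v \<noteq> 0"
  shows "linear f"
proof -
  have cancel: "a = b" if "a *\<^sub>R f v = b *\<^sub>R f v" for a b
    using that \<open>f v \<noteq> 0\<close> by simp
  have "c (a + b) = c a + c b" for a b
  proof (rule cancel)
    show "c (a + b) *\<^sub>R f v = (c a + c b) *\<^sub>R f v"
      using scale[of "a + b" v] scale[of a v] scale[of b v]
        additive.add[OF add, of "a *\<^sub>R v" "b *\<^sub>R v"]
      by (simp add: scaleR_add_left)
  qed
  then have c_add: "Modules.additive c" by (rule additive.intro)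
  have c_mult: "c (a * b) = c a * c b" for a b
  proof (rule cancel)
    show "c (a * b) *\<^sub>R f v = (c a * c b) *\<^sub>R f v"
      using scale[of "a * b" v] scale[of a "b *\<^sub>R v"] scale[of b v] by simp
  qed
  have c_one: "c 1 = 1"
    by (rule cancel) (use scale[of 1 v] in simp)
  have "c t = t" for t
    by (rule real_ring_endomorphism_eq_id[OF c_add c_mult c_one])
  then show ?thesis by (intro linearI) (simp_all add: additive.add[OF add] scale)
qed

section \<open>Two-step nilpotent groups defined by a skew form\<close>

lemma iso_group_center:
  assumes F: "F \<in> iso G H" and x: "x \<in> group_center G"
  shows "F x \<in> group_center H"
proof -
  have hom: "F \<in> hom G H" using F by (rule iso_imp_homomorphism)
  have onto: "F ` carrier G = carrier H" using F by (simp add: iso_def bij_betw_def)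
  have x_carrier: "x \<in> carrier G" using x by (simp add: group_center_def)
  have "F x \<otimes>\<^bsub>H\<^esub> F y = F y \<otimes>\<^bsub>H\<^esub> F x" if y: "y \<in> carrier G" for y
  proof -
    have "F x \<otimes>\<^bsub>H\<^esub> F y = F (x \<otimes>\<^bsub>G\<^esub> y)" by (rule hom_mult[OF hom x_carrier y, symmetric])
    also have "\<dots> = F (y \<otimes>\<^bsub>G\<^esub> x)" using x y unfolding group_center_def by auto
    also have "\<dots> = F y \<otimes>\<^bsub>H\<^esub> F x" by (rule hom_mult[OF hom y x_carrier])
    finally show ?thesis .
  qed
  then show ?thesis
    using hom_in_carrier[OF hom x_carrier] by (auto simp: group_center_def simp flip: onto)
qed

lemma two_step_group_simps [simp]:
  "carrier (two_step_group \<omega>) = UNIV"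
  "\<one>\<^bsub>two_step_group \<omega>\<^esub> = (0, 0)"
  "(v, z) \<otimes>\<^bsub>two_step_group \<omega>\<^esub> (v', z') = (v + v', z + z' + (1/2) *\<^sub>R \<omega> v v')"
  by (simp_all add: two_step_group_def)

locale skew_form =
  fixes \<omega> :: "'v::euclidean_space \<Rightarrow> 'v \<Rightarrow> 'z::euclidean_space"
  assumes linear_left: "linear (\<lambda>a. \<omega> a b)"
    and skew: "\<omega> a b = - \<omega> b a"
begin

abbreviation N :: "('v \<times> 'z) monoid" where "N \<equiv> two_step_group \<omega>"

lemma bilinear: "bilinear \<omega>"
  unfolding bilinear_def
proof (intro conjI allI)
  fix a b
  have "(\<lambda>b. \<omega> a b) = (\<lambda>b. - \<omega> b a)" using skew by blast
  then show "linear (\<lambda>b. \<omega> a b)" using linear_compose_neg[OF linear_left] by simp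
  show "linear (\<lambda>a. \<omega> a b)" by (rule linear_left)
qed

lemmas form_simps [simp] =
  bilinear_ladd[OF bilinear] bilinear_radd[OF bilinear] bilinear_lmul[OF bilinear]
  bilinear_rmul[OF bilinear] bilinear_lneg[OF bilinear] bilinear_rneg[OF bilinear]
  bilinear_lzero[OF bilinear] bilinear_rzero[OF bilinear]
  bilinear_lsub[OF bilinear] bilinear_rsub[OF bilinear]

lemma alternating [simp]: "\<omega> a a = 0"
  using self_eq_neg_imp_zero skew by blast

lemma group: "group N"
proof (rule groupI)
  fix x y z :: "'v \<times> 'z"
  show "(x \<otimes>\<^bsub>N\<^esub> y) \<otimes>\<^bsub>N\<^esub> z = x \<otimes>\<^bsub>N\<^esub> (y \<otimes>\<^bsub>N\<^esub> z)"
    by (cases x, cases y, cases z) (simp add: algebra_simps)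
  show "\<exists>y\<in>carrier N. y \<otimes>\<^bsub>N\<^esub> x = \<one>\<^bsub>N\<^esub>"
    by (cases x) (rule bexI[where x="(- fst x, - snd x)"], auto)
qed auto

lemma inv [simp]: "inv\<^bsub>N\<^esub> (v, z) = (- v, - z)"
  by (rule group.inv_equality[OF group]) auto

lemma mult_swap: "(v, z) \<otimes>\<^bsub>N\<^esub> (w, z') = (0, \<omega> v w) \<otimes>\<^bsub>N\<^esub> ((w, z') \<otimes>\<^bsub>N\<^esub> (v, z))"
proof -
  have "(1/2) *\<^sub>R \<omega> v w = \<omega> v w + (1/2) *\<^sub>R \<omega> w v"
    using skew[of w v] scaleR_half_double[of "\<omega> v w"] by (simp add: scaleR_add_right eq_diff_eq)
  then show ?thesis by (simp add: algebra_simps)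
qed

lemma zero_mem_group_center: "(0, z) \<in> group_center N"
  by (auto simp: group_center_def)

lemma central_aut_shear:
  assumes k: "Modules.additive k"
  shows "central_aut N (\<lambda>(v, z). (v, z + k v))"
  unfolding central_aut_def
proof
  let ?\<mu> = "\<lambda>(v, z). (v, z + k v)"
  have "?\<mu> \<in> hom N N" by (auto simp: hom_def additive.add[OF k] algebra_simps)
  moreover have "bij ?\<mu>"
    by (rule o_bij[where g="\<lambda>(v, z). (v, z - k v)"]) (auto simp: fun_eq_iff)
  ultimately show "?\<mu> \<in> iso N N" by (simp add: iso_def)
  show "\<forall>x\<in>carrier N. inv\<^bsub>N\<^esub> x \<otimes>\<^bsub>N\<^esub> ?\<mu> x \<in> group_center N"
    by (auto simp: zero_mem_group_center)
qed

lemma lie_aut_map_prod: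
  assumes f: "linear f" "bij f" and g: "linear g" "bij g"
    and bracket: "\<And>v w. g (\<omega> v w) = \<omega> (f v) (f w)"
  shows "lie_aut N (map_prod f g)"
  unfolding lie_aut_def
proof
  have "map_prod f g \<in> hom N N"
    by (auto simp: hom_def linear_add[OF f(1)] linear_add[OF g(1)] linear_scale[OF g(1)] bracket)
  moreover have "bij (map_prod f g)" using bij_betw_map_prod[OF f(2) g(2)] by simp
  ultimately show "map_prod f g \<in> iso N N" by (simp add: iso_def)
  have "continuous_on UNIV (\<lambda>x. (f (fst x), g (snd x)))"
    by (intro continuous_on_Pair linear_continuous_on_compose[OF continuous_on_fst f(1)]
        linear_continuous_on_compose[OF continuous_on_snd g(1)] continuous_on_id)
  then show "continuous_on (carrier N) (map_prod f g)" by (simp add: map_prod_def case_prod_beta)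
qed

end

locale nondegenerate_skew_form = skew_form +
  assumes nondegenerate: "\<forall>b. \<omega> a b = 0 \<Longrightarrow> a = 0"
begin

lemma group_center_eq: "group_center N = {0} \<times> UNIV"
proof
  show "{0} \<times> UNIV \<subseteq> group_center N" using zero_mem_group_center by auto
  show "group_center N \<subseteq> {0} \<times> UNIV"
  proof
    fix x assume x: "x \<in> group_center N"
    obtain a z where az: "x = (a, z)" by force
    have "\<omega> a b = 0" for b
    proof -
      have "(a, z) \<otimes>\<^bsub>N\<^esub> (b, 0) = (b, 0) \<otimes>\<^bsub>N\<^esub> (a, z)" using x az by (simp add: group_center_def)
      then have "\<omega> a b = \<omega> b a" by (simp add: add.commute)
      then have "\<omega> a b = - \<omega> a b" using skew[of b a] by simp
      then show ?thesis by (rule self_eq_neg_imp_zero)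
    qed
    then show "x \<in> {0} \<times> UNIV" using nondegenerate az by blast
  qed
qed

lemma exists_common_nonannihilated:
  assumes "a \<noteq> 0" "b \<noteq> 0"
  shows "\<exists>w. \<omega> a w \<noteq> 0 \<and> \<omega> b w \<noteq> 0"
proof -
  obtain wa where wa: "\<omega> a wa \<noteq> 0" using nondegenerate assms(1) by blast
  obtain wb where wb: "\<omega> b wb \<noteq> 0" using nondegenerate assms(2) by blast
  consider "\<omega> b wa \<noteq> 0" | "\<omega> a wb \<noteq> 0" | "\<omega> b wa = 0" "\<omega> a wb = 0" by blast
  then show ?thesis
  proof cases
    case 3
    then have "\<omega> a (wa + wb) \<noteq> 0 \<and> \<omega> b (wa + wb) \<noteq> 0" using wa wb by simp
    then show ?thesis by blast
  qed (use wa wb in blast)+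
qed

end

locale rigid_skew_form = nondegenerate_skew_form +
  assumes surjective: "\<exists>a b. \<omega> a b = z"
    and collinear_if_annihilated:
      "x \<noteq> 0 \<Longrightarrow> \<forall>y. \<omega> x y = 0 \<longrightarrow> \<omega> u y = 0 \<Longrightarrow> \<exists>c. u = c *\<^sub>R x"

locale bracket_preserving = rigid_skew_form \<omega>
  for \<omega> :: "'v::euclidean_space \<Rightarrow> 'v \<Rightarrow> 'z::euclidean_space" +
  fixes f :: "'v \<Rightarrow> 'v" and g :: "'z \<Rightarrow> 'z"
  assumes additive_f: "Modules.additive f" and surj_f: "surj f"
    and additive_g: "Modules.additive g" and g_eq_0: "g z = 0 \<Longrightarrow> z = 0"
    and bracket: "g (\<omega> v w) = \<omega> (f v) (f w)"
begin

lemma bracket_eq_0_iff: "\<omega> (f v) (f w) = 0 \<longleftrightarrow> \<omega> v w = 0"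
  using bracket g_eq_0 additive.zero[OF additive_g] by metis

lemma f_eq_0_iff: "f v = 0 \<longleftrightarrow> v = 0"
proof
  assume "f v = 0"
  then have "\<forall>w. \<omega> v w = 0" using bracket_eq_0_iff by (metis bilinear_lzero[OF bilinear])
  then show "v = 0" by (rule nondegenerate)
qed (simp add: additive.zero[OF additive_f])

lemma scaleR_collinear:
  assumes "v \<noteq> 0"
  shows "\<exists>c. f (t *\<^sub>R v) = c *\<^sub>R f v"
proof (rule collinear_if_annihilated)
  show "f v \<noteq> 0" using assms f_eq_0_iff by simp
  show "\<forall>y. \<omega> (f v) y = 0 \<longrightarrow> \<omega> (f (t *\<^sub>R v)) y = 0"
  proof (intro allI impI)
    fix y assume "\<omega> (f v) y = 0"
    moreover obtain w where "y = f w" using surj_f by (metis surjD)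
    ultimately show "\<omega> (f (t *\<^sub>R v)) y = 0" using bracket_eq_0_iff by simp
  qed
qed

text \<open>The scalar does not depend on the vector: the bracket identifies the scalars of any two
  vectors that are not \<omega>-orthogonal, and any two nonzero vectors have a common partner.\<close>

lemma semilinear: "\<exists>c. \<forall>t v. f (t *\<^sub>R v) = c t *\<^sub>R f v"
proof -
  define c where "c t v = (SOME c. f (t *\<^sub>R v) = c *\<^sub>R f v)" for t v
  have c: "f (t *\<^sub>R v) = c t v *\<^sub>R f v" if "v \<noteq> 0" for t v
    unfolding c_def by (rule someI_ex[OF scaleR_collinear[OF that]])
  have c_eq: "c t v = c t w" if vw: "\<omega> v w \<noteq> 0" for t v w
  proof -
    have v: "v \<noteq> 0" and w: "w \<noteq> 0" using vw by auto
    have "c t v *\<^sub>R \<omega> (f v) (f w) = \<omega> (f (t *\<^sub>R v)) (f w)" using c[OF v] by simp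
    also have "\<dots> = g (\<omega> (t *\<^sub>R v) w)" by (rule bracket[symmetric])
    also have "\<dots> = g (\<omega> v (t *\<^sub>R w))" by simp
    also have "\<dots> = \<omega> (f v) (f (t *\<^sub>R w))" by (rule bracket)
    also have "\<dots> = c t w *\<^sub>R \<omega> (f v) (f w)" using c[OF w] by simp
    finally show ?thesis using bracket_eq_0_iff vw by simp
  qed
  obtain v0 :: 'v where v0: "v0 \<noteq> 0" using nonzero_Basis SOME_Basis by blast
  have "f (t *\<^sub>R v) = c t v0 *\<^sub>R f v" for t v
  proof (cases "v = 0")
    case True
    then show ?thesis by (simp add: additive.zero[OF additive_f])
  next
    case False
    obtain w where "\<omega> v0 w \<noteq> 0" "\<omega> v w \<noteq> 0"
      using exists_common_nonannihilated[OF v0 False] by blast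
    then show ?thesis using c[OF False] c_eq by metis
  qed
  then show ?thesis by (intro exI[of _ "\<lambda>t. c t v0"] allI)
qed

lemma linear_f: "linear f"
proof -
  obtain c where c: "\<And>t v. f (t *\<^sub>R v) = c t *\<^sub>R f v" using semilinear by blast
  obtain v :: 'v where "v \<noteq> 0" using nonzero_Basis SOME_Basis by blast
  then have "f v \<noteq> 0" using f_eq_0_iff by simp
  then show ?thesis by (rule semilinear_imp_linear[OF additive_f c])
qed

lemma linear_g: "linear g"
proof (rule linearI)
  show "g (a + b) = g a + g b" for a b by (rule additive.add[OF additive_g])
  show "g (t *\<^sub>R z) = t *\<^sub>R g z" for t z
  proof -
    obtain a b where "\<omega> a b = z" using surjective by blast
    then show ?thesis using bracket[of "t *\<^sub>R a" b] bracket[of a b] linear_scale[OF linear_f] by simp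
  qed
qed

lemma bij_f: "bij f"
proof (rule bijI)
  show "inj f"
    using f_eq_0_iff additive.diff[OF additive_f] by (intro injI) (metis eq_iff_diff_eq_0)
qed (rule surj_f)

lemma bij_g: "bij g"
proof -
  have "inj g"
    using g_eq_0 additive.diff[OF additive_g] by (intro injI) (metis eq_iff_diff_eq_0)
  then show ?thesis using linear_inj_imp_surj[OF linear_g] by (simp add: bij_def)
qed

end

locale two_step_automorphism = nondegenerate_skew_form \<omega>
  for \<omega> :: "'v::euclidean_space \<Rightarrow> 'v \<Rightarrow> 'z::euclidean_space" +
  fixes F :: "'v \<times> 'z \<Rightarrow> 'v \<times> 'z"
  assumes automorphism: "F \<in> iso (two_step_group \<omega>) (two_step_group \<omega>)"
begin

definition f :: "'v \<Rightarrow> 'v" where "f v = fst (F (v, 0))"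
definition h :: "'v \<Rightarrow> 'z" where "h v = snd (F (v, 0))"
definition g :: "'z \<Rightarrow> 'z" where "g z = snd (F (0, z))"

lemma hom: "F (x \<otimes>\<^bsub>N\<^esub> y) = F x \<otimes>\<^bsub>N\<^esub> F y"
  using hom_mult[OF iso_imp_homomorphism[OF automorphism]] by simp

lemma bij_F: "bij F"
  using automorphism by (simp add: iso_def)

lemma F_center: "F (0, z) = (0, g z)"
proof -
  have "F (0, z) \<in> group_center N"
    using iso_group_center[OF automorphism] group_center_eq by blast
  then show ?thesis using group_center_eq by (auto simp: g_def prod_eq_iff)
qed

lemma F_eq: "F (v, z) = (f v, h v + g z)"
proof -
  have "F (v, 0) = (f v, h v)" by (simp add: f_def h_def)
  then show ?thesis using hom[of "(v, 0)" "(0, z)"] by (simp add: F_center)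
qed

lemma additive_g: "Modules.additive g"
  using hom[of "(0, a)" "(0, b)" for a b] by unfold_locales (simp add: F_center)

lemma hom_base:
  "f (a + b) = f a + f b \<and> h (a + b) + g ((1/2) *\<^sub>R \<omega> a b) = h a + h b + (1/2) *\<^sub>R \<omega> (f a) (f b)"
  using hom[of "(a, 0)" "(b, 0)"] by (simp add: F_eq additive.zero[OF additive_g] algebra_simps)

lemma additive_f: "Modules.additive f"
  using hom_base by unfold_locales blast

text \<open>F preserves commutators, and the commutator of (v, z) and (w, z') is (0, \<omega> v w).\<close>

lemma bracket: "g (\<omega> v w) = \<omega> (f v) (f w)"
proof -
  let ?x = "(v, 0)" and ?y = "(w, 0)"
  have "(0, g (\<omega> v w)) \<otimes>\<^bsub>N\<^esub> (F ?y \<otimes>\<^bsub>N\<^esub> F ?x) = F ((0, \<omega> v w) \<otimes>\<^bsub>N\<^esub> (?y \<otimes>\<^bsub>N\<^esub> ?x))"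
    by (simp only: hom F_center)
  also have "\<dots> = F (?x \<otimes>\<^bsub>N\<^esub> ?y)"
    by (simp only: mult_swap[of v 0 w 0])
  also have "\<dots> = (0, \<omega> (f v) (f w)) \<otimes>\<^bsub>N\<^esub> (F ?y \<otimes>\<^bsub>N\<^esub> F ?x)"
    unfolding hom F_eq by (rule mult_swap)
  finally show ?thesis by (simp add: F_eq)
qed

lemma additive_h: "Modules.additive h"
  using hom_base bracket by unfold_locales (simp add: additive_scaleR_half[OF additive_g])

lemma surj_f: "surj f"
proof -
  have "\<exists>v. f v = y" for y
  proof -
    obtain x where "F x = (y, 0)" using bij_is_surj[OF bij_F] by (metis surjD)
    then show ?thesis by (cases x) (auto simp: F_eq)
  qed
  then show ?thesis by (metis surjI)
qed

lemma g_eq_0: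
  assumes "g z = 0" shows "z = 0"
proof -
  have "F (0, z) = F (0, 0)" using assms F_center additive.zero[OF additive_g] by simp
  then show ?thesis using bij_is_inj[OF bij_F] by (simp add: inj_eq)
qed

end

lemma (in rigid_skew_form) aut_central_lie_decomp: "aut_central_lie_decomp N"
  unfolding aut_central_lie_decomp_def
proof
  fix F assume "F \<in> iso N N"
  then interpret two_step_automorphism \<omega> F by unfold_locales
  interpret bracket_preserving \<omega> f g
    by unfold_locales
      (use additive.add[OF additive_f] surj_f additive.add[OF additive_g] g_eq_0 bracket in auto)
  define \<mu> where "\<mu> = (\<lambda>(v, z). (v, z + h (inv_into UNIV f v)))"
  have "Modules.additive (inv_into UNIV f)" by (rule additive_inv_into[OF additive_f bij_f])
  then have "Modules.additive (\<lambda>v. h (inv_into UNIV f v))"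
    using additive.add[OF additive_h] by unfold_locales (simp add: additive.add)
  then have "central_aut N \<mu>" unfolding \<mu>_def by (rule central_aut_shear)
  moreover have "lie_aut N (map_prod f g)"
    by (rule lie_aut_map_prod[OF linear_f bij_f linear_g bij_g bracket])
  moreover have "F x = \<mu> (map_prod f g x)" for x
    using bij_f by (cases x) (simp add: \<mu>_def F_eq bij_is_inj add.commute)
  ultimately show "\<exists>\<mu> Fb. central_aut N \<mu> \<and> lie_aut N Fb \<and> (\<forall>x\<in>carrier N. F x = \<mu> (Fb x))"
    by blast
qed

section \<open>The Iwasawa N-groups of real rank one\<close>

lemma aut_central_lie_decomp_vec_group: "aut_central_lie_decomp (vec_group :: (real^'n) monoid)"
  unfolding aut_central_lie_decomp_def
proof
  fix F :: "real^'n \<Rightarrow> real^'n"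
  assume "F \<in> iso vec_group vec_group"
  then have "central_aut vec_group F"
    by (auto simp: central_aut_def group_center_def vec_group_def add.commute)
  moreover have "lie_aut vec_group id"
    by (simp add: lie_aut_def id_iso)
  ultimately show "\<exists>\<mu> Fb. central_aut vec_group \<mu> \<and> lie_aut vec_group Fb \<and>
      (\<forall>x\<in>carrier vec_group. F x = \<mu> (Fb x))"
    by (intro exI[of _ F] exI[of _ id]) simp
qed

lemma rigid_skew_form_real:
  fixes \<omega> :: "'v::euclidean_space \<Rightarrow> 'v \<Rightarrow> real"
  assumes "nondegenerate_skew_form \<omega>"
  shows "rigid_skew_form \<omega>"
proof -
  interpret nondegenerate_skew_form \<omega> by fact
  have partner: "\<exists>b. \<omega> a b \<noteq> 0" if "a \<noteq> 0" for a using nondegenerate that by blast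
  show ?thesis
  proof (intro rigid_skew_form.intro[OF assms] rigid_skew_form_axioms.intro)
    fix z :: real
    obtain a :: 'v where "a \<noteq> 0" using nonzero_Basis SOME_Basis by blast
    then obtain b where b: "\<omega> a b \<noteq> 0" using partner by blast
    have "\<omega> a ((z / \<omega> a b) *\<^sub>R b) = z" using b by simp
    then show "\<exists>a b. \<omega> a b = z" by blast
  next
    fix x u :: 'v
    assume x: "x \<noteq> 0" and ker: "\<forall>y. \<omega> x y = 0 \<longrightarrow> \<omega> u y = 0"
    obtain y0 where y0: "\<omega> x y0 \<noteq> 0" using partner[OF x] by blast
    define c where "c = \<omega> u y0 / \<omega> x y0"
    have "\<omega> (u - c *\<^sub>R x) y = 0" for y
    proof -
      have "\<omega> x (y - (\<omega> x y / \<omega> x y0) *\<^sub>R y0) = 0" using y0 by simp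
      then have "\<omega> u (y - (\<omega> x y / \<omega> x y0) *\<^sub>R y0) = 0" using ker by blast
      then show ?thesis using y0 by (simp add: c_def field_simps)
    qed
    then have "u - c *\<^sub>R x = 0" using nondegenerate by blast
    then show "\<exists>c. u = c *\<^sub>R x" by auto
  qed
qed

lemma nondegenerate_skew_form_heis:
  "nondegenerate_skew_form (heis_form :: ((real^'m) \<times> (real^'m)) \<Rightarrow> _ \<Rightarrow> real)"
proof (intro nondegenerate_skew_form.intro skew_form.intro nondegenerate_skew_form_axioms.intro)
  show "linear (\<lambda>a. heis_form a b)" for b :: "(real^'m) \<times> (real^'m)"
    by (intro linearI)
      (auto simp: heis_form_def inner_add_left inner_add_right algebra_simps split: prod.splits)
  show "heis_form a b = - heis_form b a" for a b :: "(real^'m) \<times> (real^'m)"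
    by (auto simp: heis_form_def inner_commute split: prod.splits)
  show "a = 0" if "\<forall>b. heis_form a b = 0" for a :: "(real^'m) \<times> (real^'m)"
  proof -
    obtain x y where a: "a = (x, y)" by force
    have "heis_form a (0, x) = 0" "heis_form a (y, 0) = 0" using that by auto
    then have "x \<bullet> x = 0" "y \<bullet> y = 0" by (auto simp: a heis_form_def)
    then show ?thesis using a by (simp add: zero_prod_def)
  qed
qed

definition qone :: "real^4" where "qone = (\<chi> l. if l = 1 then 1 else 0)"
definition qi :: "real^4" where "qi = (\<chi> l. if l = 2 then 1 else 0)"

lemmas quaternion_defs = qmult_def qconj_def qim_def qone_def qi_def vec_eq_iff forall_4 forall_3

lemma bilinear_qmult: "bilinear qmult"
  by (auto simp: bilinear_def quaternion_defs algebra_simps intro!: linearI)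

lemma linear_qmult_left: "linear (\<lambda>p. qmult p q)"
  using bilinear_qmult by (simp add: bilinear_def)

lemma linear_qconj: "linear qconj"
  by (rule linearI) (simp_all add: quaternion_defs)

lemma linear_qim: "linear qim"
  by (rule linearI) (simp_all add: quaternion_defs)

lemma qmult_assoc: "qmult (qmult a b) c = qmult a (qmult b c)"
  by (simp add: quaternion_defs algebra_simps)

lemma qconj_qmult: "qconj (qmult a b) = qmult (qconj b) (qconj a)"
  by (simp add: quaternion_defs algebra_simps)

lemma qim_qconj: "qim (qconj a) = - qim a"
  by (simp add: quaternion_defs)

lemma qmult_qconj_self: "qmult (qconj p) p = (p \<bullet> p) *\<^sub>R qone"
  by (simp add: quaternion_defs inner_vec_def sum_4 power2_eq_square algebra_simps)

lemma qmult_qone_left: "qmult qone q = q"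
  by (simp add: quaternion_defs)

lemma qim_eq_0_imp_real: "qim p = 0 \<Longrightarrow> p = (p$1) *\<^sub>R qone"
  by (simp add: quaternion_defs)

lemma qim_eq_0_and_qim_qmult_qi_eq_0: "qim q = 0 \<Longrightarrow> qim (qmult q qi) = 0 \<Longrightarrow> q = 0"
  by (simp add: quaternion_defs)

lemma qim_qi_neq_0: "qim qi \<noteq> 0"
  by (simp add: quaternion_defs)

definition qherm :: "real^4^'k \<Rightarrow> real^4^'k \<Rightarrow> real^4" where
  "qherm v w = (\<Sum>i\<in>UNIV. qmult (qconj (v$i)) (w$i))"

definition qrscale :: "real^4^'k \<Rightarrow> real^4 \<Rightarrow> real^4^'k" where
  "qrscale w q = (\<chi> i. qmult (w$i) q)"

lemma qconj_qconj [simp]: "qconj (qconj a) = a"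
  by (simp add: quaternion_defs)

lemma qheis_form_eq_qim_qherm: "qheis_form v w = qim (qherm v w)"
  by (simp add: qheis_form_def qherm_def)

lemma bilinear_qherm: "bilinear qherm"
  unfolding bilinear_def qherm_def
  by (auto intro!: linearI simp: sum.distrib scaleR_sum_right linear_add[OF linear_qconj]
      linear_scale[OF linear_qconj] bilinear_ladd[OF bilinear_qmult] bilinear_radd[OF bilinear_qmult]
      bilinear_lmul[OF bilinear_qmult] bilinear_rmul[OF bilinear_qmult])

lemmas qherm_bilinear_simps =
  bilinear_ladd[OF bilinear_qherm] bilinear_radd[OF bilinear_qherm]
  bilinear_lmul[OF bilinear_qherm] bilinear_rmul[OF bilinear_qherm]
  bilinear_lsub[OF bilinear_qherm] bilinear_rsub[OF bilinear_qherm] bilinear_rzero[OF bilinear_qherm]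

lemmas qmult_bilinear_simps =
  bilinear_lmul[OF bilinear_qmult] bilinear_rmul[OF bilinear_qmult] bilinear_lzero[OF bilinear_qmult]

lemma qherm_swap: "qherm a b = qconj (qherm b a)"
  by (simp add: qherm_def linear_sum[OF linear_qconj] qconj_qmult)

lemma qherm_qrscale: "qherm v (qrscale w q) = qmult (qherm v w) q"
  by (simp add: qherm_def qrscale_def qmult_assoc linear_sum[OF linear_qmult_left])

lemma qherm_self: "qherm x x = (x \<bullet> x) *\<^sub>R qone"
  by (simp add: qherm_def qmult_qconj_self inner_vec_def scaleR_sum_left)

lemma skew_form_qheis: "skew_form (qheis_form :: real^4^'k \<Rightarrow> _ \<Rightarrow> real^3)"
proof (rule skew_form.intro)
  show "linear (\<lambda>a. qheis_form a b)" for b :: "real^4^'k"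
    by (intro linearI) (simp_all add: qheis_form_eq_qim_qherm qherm_bilinear_simps
        linear_add[OF linear_qim] linear_scale[OF linear_qim])
  show "qheis_form a b = - qheis_form b a" for a b :: "real^4^'k"
    by (metis qheis_form_eq_qim_qherm qherm_swap qim_qconj)
qed

lemma qheis_form_nondegenerate:
  fixes a :: "real^4^'k"
  assumes "\<forall>b. qheis_form a b = 0"
  shows "a = 0"
proof (rule ccontr)
  assume "a \<noteq> 0"
  have "qheis_form a (qrscale a qi) = (a \<bullet> a) *\<^sub>R qim qi"
    by (simp add: qheis_form_eq_qim_qherm qherm_qrscale qherm_self qmult_bilinear_simps
        qmult_qone_left linear_scale[OF linear_qim])
  then show False using assms \<open>a \<noteq> 0\<close> qim_qi_neq_0 by simp
qed

lemma qheis_form_surjective: "\<exists>a b :: real^4^'k. qheis_form a b = z"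
proof -
  obtain i0 :: 'k where True by blast
  define q :: "real^4" where
    "q = (\<chi> l. if l = 1 then 0 else if l = 2 then z$1 else if l = 3 then z$2 else z$3)"
  define a :: "real^4^'k" where "a = (\<chi> i. if i = i0 then qone else 0)"
  define b :: "real^4^'k" where "b = (\<chi> i. if i = i0 then q else 0)"
  have "qmult (qconj (a$i)) (b$i) = (if i = i0 then q else 0)" for i
    by (cases "i = i0") (simp_all add: a_def b_def quaternion_defs)
  then have "qherm a b = q" by (simp add: qherm_def)
  moreover have "qim q = z" by (simp add: q_def qim_def vec_eq_iff forall_3)
  ultimately show ?thesis by (metis qheis_form_eq_qim_qherm)
qed

text \<open>Write \<langle>v, w\<rangle> for qherm v w.  Since Im\<langle>u, x\<rangle> = 0, the product \<langle>u, x\<rangle> is real.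
  Every w splits as y + x q with \<langle>x, y\<rangle> = 0; then also \<langle>x, y i\<rangle> = 0, so
  Im\<langle>u, y\<rangle> = Im(\<langle>u, y\<rangle> i) = 0, i.e. \<langle>u, y\<rangle> = 0, and \<langle>u, w\<rangle> = \<langle>u, x\<rangle> q is a fixed
  real multiple of \<langle>x, w\<rangle>.\<close>

lemma qheis_form_collinear_if_annihilated:
  fixes x u :: "real^4^'k"
  assumes x: "x \<noteq> 0" and ker: "\<forall>y. qheis_form x y = 0 \<longrightarrow> qheis_form u y = 0"
  shows "\<exists>c. u = c *\<^sub>R x"
proof -
  have xx: "x \<bullet> x \<noteq> 0" using x by simp
  have "qheis_form u x = 0" using ker skew_form.alternating[OF skew_form_qheis] by blast
  then have ux: "qherm u x = (qherm u x $ 1) *\<^sub>R qone"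
    by (intro qim_eq_0_imp_real) (simp add: qheis_form_eq_qim_qherm)
  define c where "c = qherm u x $ 1 / (x \<bullet> x)"
  have "qherm (u - c *\<^sub>R x) w = 0" for w
  proof -
    define q where "q = (1 / (x \<bullet> x)) *\<^sub>R qherm x w"
    define y where "y = w - qrscale x q"
    have hxy: "qherm x y = 0"
      using xx by (simp add: y_def q_def qherm_bilinear_simps qherm_qrscale qherm_self
          qmult_bilinear_simps qmult_qone_left)
    then have "qheis_form x y = 0" "qheis_form x (qrscale y qi) = 0"
      by (simp_all add: qheis_form_eq_qim_qherm qherm_qrscale qmult_bilinear_simps linear_0[OF linear_qim])
    then have "qheis_form u y = 0" "qheis_form u (qrscale y qi) = 0"
      using ker by blast+
    then have "qim (qherm u y) = 0" "qim (qmult (qherm u y) qi) = 0"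
      by (simp_all add: qheis_form_eq_qim_qherm qherm_qrscale)
    then have "qherm u y = 0" by (rule qim_eq_0_and_qim_qmult_qi_eq_0)
    then have "qherm u w = qmult (qherm u x) q" by (simp add: y_def qherm_bilinear_simps qherm_qrscale)
    also have "\<dots> = c *\<^sub>R qherm x w"
      by (subst ux) (simp add: q_def c_def qmult_bilinear_simps qmult_qone_left)
    finally show ?thesis by (simp add: qherm_bilinear_simps)
  qed
  then have "(u - c *\<^sub>R x) \<bullet> (u - c *\<^sub>R x) = 0"
    using qherm_self[of "u - c *\<^sub>R x"] by (simp add: quaternion_defs)
  then show ?thesis by auto
qed

lemma rigid_skew_form_qheis: "rigid_skew_form (qheis_form :: real^4^'k \<Rightarrow> _ \<Rightarrow> real^3)"
  by (intro rigid_skew_form.intro nondegenerate_skew_form.intro skew_form_qheis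
      nondegenerate_skew_form_axioms.intro rigid_skew_form_axioms.intro qheis_form_nondegenerate
      qheis_form_surjective qheis_form_collinear_if_annihilated)

lemmas octonion_defs = oheis_form_def omult_def oconj_def oim_def quaternion_defs

lemma skew_form_oheis: "skew_form oheis_form"
proof (rule skew_form.intro)
  fix a b :: "(real^4) \<times> (real^4)"
  show "linear (\<lambda>a. oheis_form a b)"
  proof (rule linearI)
    fix x y :: "(real^4) \<times> (real^4)" and r :: real
    show "oheis_form (x + y) b = oheis_form x b + oheis_form y b"
      by (cases x, cases y, cases b) (simp add: octonion_defs algebra_simps)
    show "oheis_form (r *\<^sub>R x) b = r *\<^sub>R oheis_form x b"
      by (cases x, cases b) (simp add: octonion_defs algebra_simps)
  qed
  show "oheis_form a b = - oheis_form b a"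
    by (cases a, cases b) (simp add: octonion_defs algebra_simps)
qed

lemma oheis_form_nondegenerate:
  assumes "\<forall>b. oheis_form a b = 0"
  shows "a = 0"
proof -
  have "oheis_form a (qone, 0) = 0" "oheis_form a (qi, 0) = 0" using assms by auto
  then show ?thesis by (cases a) (simp add: octonion_defs zero_prod_def)
qed

lemma oheis_form_surjective: "\<exists>a b. oheis_form a b = z"
proof -
  obtain z3 z4 where z: "z = (z3, z4)" by force
  define q :: "real^4" where
    "q = (\<chi> l. if l = 1 then 0 else if l = 2 then z3$1 else if l = 3 then z3$2 else z3$3)"
  have "oheis_form (qone, 0) (q, z4) = (qim q, z4)" by (simp add: octonion_defs)
  moreover have "qim q = z3" by (simp add: q_def qim_def vec_eq_iff forall_3)
  ultimately show ?thesis using z by metis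
qed

lemma omult_omult_oconj: "omult (omult a b) (oconj b) = (b \<bullet> b) *\<^sub>R a"
  by (cases a, cases b) (simp add: octonion_defs inner_vec_def sum_4 algebra_simps power2_eq_square)

lemma oim_eq_0_imp_real: "oim p = 0 \<Longrightarrow> p = ((fst p $ 1) *\<^sub>R qone, 0)"
  by (cases p) (simp add: octonion_defs zero_prod_def)

lemma omult_real_left: "omult (s *\<^sub>R qone, 0) y = s *\<^sub>R y"
  by (cases y) (simp add: octonion_defs)

lemma oconj_scaleR: "oconj (s *\<^sub>R y) = s *\<^sub>R oconj y"
  by (cases y) (simp add: octonion_defs)

lemma oconj_oconj: "oconj (oconj y) = y"
  by (cases y) (simp add: octonion_defs)

text \<open>Since Im(u* x) = 0, the product u* x is a real number s, and multiplying it by x* on the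
  right gives |x|^2 u* = s x*.\<close>

lemma oheis_form_collinear_if_annihilated:
  assumes x: "x \<noteq> 0" and ker: "\<forall>y. oheis_form x y = 0 \<longrightarrow> oheis_form u y = 0"
  shows "\<exists>c. u = c *\<^sub>R x"
proof -
  define s where "s = fst (omult (oconj u) x) $ 1"
  have "oheis_form u x = 0" using ker skew_form.alternating[OF skew_form_oheis] by blast
  then have "oim (omult (oconj u) x) = 0" by (simp add: oheis_form_def)
  then have real: "omult (oconj u) x = (s *\<^sub>R qone, 0)" unfolding s_def by (rule oim_eq_0_imp_real)
  have "(x \<bullet> x) *\<^sub>R oconj u = omult (omult (oconj u) x) (oconj x)" by (simp add: omult_omult_oconj)
  also have "\<dots> = s *\<^sub>R oconj x" using real by (simp add: omult_real_left)
  finally have "(x \<bullet> x) *\<^sub>R u = s *\<^sub>R x" by (metis oconj_scaleR oconj_oconj)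
  then have "(1 / (x \<bullet> x)) *\<^sub>R ((x \<bullet> x) *\<^sub>R u) = (s / (x \<bullet> x)) *\<^sub>R x" by simp
  then show ?thesis using x by auto
qed

lemma rigid_skew_form_oheis: "rigid_skew_form oheis_form"
  by (intro rigid_skew_form.intro nondegenerate_skew_form.intro skew_form_oheis
      nondegenerate_skew_form_axioms.intro rigid_skew_form_axioms.intro oheis_form_nondegenerate
      oheis_form_surjective oheis_form_collinear_if_annihilated)

theorem theoremC:
  shows "aut_central_lie_decomp (vec_group :: (real^'n) monoid)
       \<and> aut_central_lie_decomp (heisenberg_group :: (((real^'m) \<times> (real^'m)) \<times> real) monoid)
       \<and> aut_central_lie_decomp (quaternionic_heisenberg_group :: ((real^4^'k) \<times> (real^3)) monoid)
       \<and> aut_central_lie_decomp octonionic_heisenberg_group"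
  unfolding heisenberg_group_def quaternionic_heisenberg_group_def octonionic_heisenberg_group_def
  using aut_central_lie_decomp_vec_group
    rigid_skew_form.aut_central_lie_decomp[OF rigid_skew_form_real[OF nondegenerate_skew_form_heis]]
    rigid_skew_form.aut_central_lie_decomp[OF rigid_skew_form_qheis]
    rigid_skew_form.aut_central_lie_decomp[OF rigid_skew_form_oheis]
  by blast

end
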